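(* Let $A$ be a finite nonempty set, $M\subseteq A^A$, and let $\emptyset\ne B\subsetneq A$ be invariant under $M$ (i.e., $g(B)\subseteq B$ for all $g\in M$). Then $\mathrm{gQuord}_B(M\restriction_B)=(\mathrm{gQuord}_A M)\restriction_B$.
   Context: $M\restriction_B:=\{g\restriction_B\mid g\in M\}\subseteq B^B$; for a relation $\rho\subseteq A^m$, $\rho\restriction_B:=\rho\cap B^m$, and for a set $Q$ of relations, $Q\restriction_B:=\{\rho\restriction_B\mid\rho\in Q\}$. A relation $\rho\subseteq X^m$ is a generalized quasiorder on $X$ if it is reflexive ($(x,\dots,x)\in\rho$ for all $x\in X$) and for every $m\times m$-matrix over $X$ whose rows and columns all lie in $\rho$, its diagonal lies in $\rho$. $\mathrm{gQuord}_X N$ is the set of all generalized quasiorders on $X$ preserved by every $h\in N\subseteq X^X$ (i.e., $h$ maps tuples of $\rho$ componentwise into $\rho$). *)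

theory Defs
  imports "HOL-Library.FuncSet"
begin

definition tuples :: "'a set \<Rightarrow> nat \<Rightarrow> 'a list set" where
  "tuples X m = {xs. length xs = m \<and> set xs \<subseteq> X}"

definition reflexive_rel :: "'a set \<Rightarrow> nat \<Rightarrow> 'a list set \<Rightarrow> bool" where
  "reflexive_rel X m \<rho> \<longleftrightarrow> (\<forall>x\<in>X. replicate m x \<in> \<rho>)"

definition matrix_closed :: "nat \<Rightarrow> 'a list set \<Rightarrow> bool" where
  "matrix_closed m \<rho> \<longleftrightarrow>
     (\<forall>r :: nat \<Rightarrow> nat \<Rightarrow> 'a.
        (\<forall>i<m. map (\<lambda>j. r i j) [0..<m] \<in> \<rho>) \<longrightarrow>
        (\<forall>j<m. map (\<lambda>i. r i j) [0..<m] \<in> \<rho>) \<longrightarrow>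
        map (\<lambda>i. r i i) [0..<m] \<in> \<rho>)"

definition gen_quasiorder :: "'a set \<Rightarrow> nat \<Rightarrow> 'a list set \<Rightarrow> bool" where
  "gen_quasiorder X m \<rho> \<longleftrightarrow>
     \<rho> \<subseteq> tuples X m \<and> reflexive_rel X m \<rho> \<and> matrix_closed m \<rho>"

definition preserves :: "('a \<Rightarrow> 'a) \<Rightarrow> 'a list set \<Rightarrow> bool" where
  "preserves h \<rho> \<longleftrightarrow> (\<forall>xs\<in>\<rho>. map h xs \<in> \<rho>)"

definition gQuord :: "'a set \<Rightarrow> ('a \<Rightarrow> 'a) set \<Rightarrow> 'a list set set" where
  "gQuord X N = {\<rho>. (\<exists>m\<ge>1. gen_quasiorder X m \<rho>) \<and> (\<forall>h\<in>N. preserves h \<rho>)}"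

definition restrict_funs :: "('a \<Rightarrow> 'a) set \<Rightarrow> 'a set \<Rightarrow> ('a \<Rightarrow> 'a) set" where
  "restrict_funs M B = (\<lambda>g. restrict g B) ` M"

definition restrict_rel :: "'a list set \<Rightarrow> 'a set \<Rightarrow> 'a list set" where
  "restrict_rel \<rho> B = \<rho> \<inter> lists B"

definition restrict_rels :: "'a list set set \<Rightarrow> 'a set \<Rightarrow> 'a list set set" where
  "restrict_rels Q B = (\<lambda>\<rho>. restrict_rel \<rho> B) ` Q"

end

theory Submission
  imports Defs
begin

text \<open>Restricting a generalized quasiorder on A to a subset B invariant under M keeps all
  its properties. Conversely, a generalized quasiorder \<sigma> on B extends to A by adjoining the
  constant tuples on A, and restricting back gives \<sigma>. In the extension every tuple outside
  \<sigma> is constant with value outside B; so if a matrix with rows and columns in the extension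
  has an entry a outside B, its row is constant a, hence every column meets a and is
  constant a, and the diagonal equals that row.\<close>

lemma map_upt_eq_replicate_iff:
  "map f [0..<m] = replicate m a \<longleftrightarrow> (\<forall>k<m. f k = a)"
  by (auto simp: list_eq_iff_nth_eq)

lemma tuples_subset_lists: "tuples X m \<subseteq> lists X"
  by (auto simp: tuples_def)

lemma tuples_mono: "B \<subseteq> A \<Longrightarrow> tuples B m \<subseteq> tuples A m"
  by (auto simp: tuples_def)

lemma gen_quasiorder_restrict_rel:
  assumes "gen_quasiorder A m \<rho>" and "B \<subseteq> A"
  shows "gen_quasiorder B m (restrict_rel \<rho> B)"
  using assms
  unfolding gen_quasiorder_def tuples_def reflexive_rel_def matrix_closed_def restrict_rel_def
  by (auto simp: in_lists_conv_set)

lemma preserves_restrict_rel: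
  assumes "preserves g \<rho>" and "g ` B \<subseteq> B"
  shows "preserves (restrict g B) (restrict_rel \<rho> B)"
  unfolding preserves_def restrict_rel_def
proof
  fix xs assume xs: "xs \<in> \<rho> \<inter> lists B"
  then have "map (restrict g B) xs = map g xs"
    by (auto simp: in_lists_conv_set)
  moreover have "map g xs \<in> \<rho>"
    using assms(1) xs by (auto simp: preserves_def)
  moreover have "map g xs \<in> lists B"
    using assms(2) xs by (auto simp: in_lists_conv_set)
  ultimately show "map (restrict g B) xs \<in> \<rho> \<inter> lists B" by (metis IntI)
qed

lemma restrict_rel_in_gQuord:
  assumes "B \<subseteq> A" and "\<forall>g\<in>M. g ` B \<subseteq> B" and "\<rho> \<in> gQuord A M"
  shows "restrict_rel \<rho> B \<in> gQuord B (restrict_funs M B)"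
proof -
  obtain m where "m \<ge> 1" "gen_quasiorder A m \<rho>" and pres: "\<forall>g\<in>M. preserves g \<rho>"
    using assms(3) by (auto simp: gQuord_def)
  then have "gen_quasiorder B m (restrict_rel \<rho> B)"
    using assms(1) gen_quasiorder_restrict_rel by blast
  moreover have "preserves h (restrict_rel \<rho> B)" if h: "h \<in> restrict_funs M B" for h
  proof -
    obtain g where "g \<in> M" "h = restrict g B"
      using h unfolding restrict_funs_def by blast
    then show ?thesis
      using pres assms(2) preserves_restrict_rel[of g \<rho> B] by simp
  qed
  ultimately show ?thesis
    using \<open>m \<ge> 1\<close> by (auto simp: gQuord_def)
qed

definition extend_by_diagonal :: "'a set \<Rightarrow> nat \<Rightarrow> 'a list set \<Rightarrow> 'a list set" where
  "extend_by_diagonal A m \<sigma> = \<sigma> \<union> (\<lambda>a. replicate m a) ` A"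

lemma extend_by_diagonal_mem_constant:
  assumes "xs \<in> extend_by_diagonal A m \<sigma>" and "\<sigma> \<subseteq> lists B"
    and "a \<in> set xs" and "a \<notin> B"
  shows "xs = replicate m a"
  using assms by (auto simp: extend_by_diagonal_def)

lemma extend_by_diagonal_mem_base:
  assumes "xs \<in> extend_by_diagonal A m \<sigma>" and "reflexive_rel B m \<sigma>"
    and "set xs \<subseteq> B" and "xs \<noteq> []"
  shows "xs \<in> \<sigma>"
  using assms by (auto simp: extend_by_diagonal_def reflexive_rel_def)

lemma matrix_closed_extend_by_diagonal:
  assumes "\<sigma> \<subseteq> lists B" and "reflexive_rel B m \<sigma>" and "matrix_closed m \<sigma>"
  shows "matrix_closed m (extend_by_diagonal A m \<sigma>)"
  unfolding matrix_closed_def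
proof (intro allI impI)
  let ?\<rho> = "extend_by_diagonal A m \<sigma>"
  fix r :: "nat \<Rightarrow> nat \<Rightarrow> 'a"
  assume rows: "\<forall>i<m. map (r i) [0..<m] \<in> ?\<rho>"
    and cols: "\<forall>j<m. map (\<lambda>i. r i j) [0..<m] \<in> ?\<rho>"
  show "map (\<lambda>i. r i i) [0..<m] \<in> ?\<rho>"
  proof (cases "\<forall>i<m. \<forall>j<m. r i j \<in> B")
    case True
    have "map (r i) [0..<m] \<in> \<sigma>" if "i < m" for i
      by (rule extend_by_diagonal_mem_base[OF _ assms(2)]) (use rows True that in auto)
    moreover have "map (\<lambda>i. r i j) [0..<m] \<in> \<sigma>" if "j < m" for j
      by (rule extend_by_diagonal_mem_base[OF _ assms(2)]) (use cols True that in auto)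
    ultimately have "map (\<lambda>i. r i i) [0..<m] \<in> \<sigma>"
      using assms(3) by (simp add: matrix_closed_def)
    then show ?thesis by (simp add: extend_by_diagonal_def)
  next
    case False
    then obtain i j where ij: "i < m" "j < m" "r i j \<notin> B" by auto
    define a where "a = r i j"
    have "map (r i) [0..<m] = replicate m a"
      by (rule extend_by_diagonal_mem_constant[where A = A, OF _ assms(1)])
        (use rows ij in \<open>auto simp: a_def\<close>)
    then have row: "\<forall>k<m. r i k = a" by (simp add: map_upt_eq_replicate_iff)
    have "r k k = a" if "k < m" for k
    proof -
      have a_in_column: "a \<in> set (map (\<lambda>l. r l k) [0..<m])"
        using row ij(1) that by (auto intro!: image_eqI[where x = i])
      have "map (\<lambda>l. r l k) [0..<m] = replicate m a"
        by (rule extend_by_diagonal_mem_constant[where A = A, OF _ assms(1) a_in_column])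
          (use cols that ij(3) in \<open>auto simp: a_def\<close>)
      then show ?thesis using that by (simp add: map_upt_eq_replicate_iff)
    qed
    with row have "map (\<lambda>k. r k k) [0..<m] = map (r i) [0..<m]" by simp
    moreover have "map (r i) [0..<m] \<in> ?\<rho>" using rows ij(1) by blast
    ultimately show ?thesis by (simp only:)
  qed
qed

lemma gen_quasiorder_extend_by_diagonal:
  assumes "gen_quasiorder B m \<sigma>" and "B \<subseteq> A"
  shows "gen_quasiorder A m (extend_by_diagonal A m \<sigma>)"
proof -
  have \<sigma>: "\<sigma> \<subseteq> tuples B m" "reflexive_rel B m \<sigma>" "matrix_closed m \<sigma>"
    using assms(1) by (auto simp: gen_quasiorder_def)
  have "(\<lambda>a. replicate m a) ` A \<subseteq> tuples A m"
    by (auto simp: tuples_def)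
  then have "extend_by_diagonal A m \<sigma> \<subseteq> tuples A m"
    using \<sigma>(1) tuples_mono[OF assms(2), of m] by (auto simp: extend_by_diagonal_def)
  moreover have "reflexive_rel A m (extend_by_diagonal A m \<sigma>)"
    by (auto simp: reflexive_rel_def extend_by_diagonal_def)
  moreover have "matrix_closed m (extend_by_diagonal A m \<sigma>)"
    using matrix_closed_extend_by_diagonal \<sigma> tuples_subset_lists by blast
  ultimately show ?thesis by (simp add: gen_quasiorder_def)
qed

lemma preserves_extend_by_diagonal:
  assumes "\<sigma> \<subseteq> lists B" and "preserves (restrict g B) \<sigma>" and "g ` A \<subseteq> A"
  shows "preserves g (extend_by_diagonal A m \<sigma>)"
  unfolding preserves_def
proof
  fix xs assume xs: "xs \<in> extend_by_diagonal A m \<sigma>"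
  show "map g xs \<in> extend_by_diagonal A m \<sigma>"
  proof (cases "xs \<in> \<sigma>")
    case True
    then have "map g xs = map (restrict g B) xs"
      using assms(1) by (auto simp: in_lists_conv_set)
    moreover have "map (restrict g B) xs \<in> \<sigma>"
      using True assms(2) by (simp add: preserves_def)
    ultimately have "map g xs \<in> \<sigma>" by (simp only:)
    then show ?thesis by (simp add: extend_by_diagonal_def)
  next
    case False
    then obtain a where "a \<in> A" "xs = replicate m a"
      using xs by (auto simp: extend_by_diagonal_def)
    then show ?thesis
      using assms(3) by (auto simp: extend_by_diagonal_def)
  qed
qed

lemma restrict_rel_extend_by_diagonal:
  assumes "\<sigma> \<subseteq> tuples B m" and "reflexive_rel B m \<sigma>" and "m \<ge> 1"
  shows "restrict_rel (extend_by_diagonal A m \<sigma>) B = \<sigma>"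
proof -
  have "replicate m a \<in> \<sigma>" if "replicate m a \<in> lists B" for a
    using that assms(2,3) by (cases m) (auto simp: reflexive_rel_def)
  moreover have "\<sigma> \<subseteq> lists B"
    using assms(1) tuples_subset_lists by blast
  ultimately show ?thesis
    by (auto simp: restrict_rel_def extend_by_diagonal_def)
qed

lemma gQuord_restrict_funs_subset:
  assumes "B \<subseteq> A" and "M \<subseteq> A \<rightarrow>\<^sub>E A"
  shows "gQuord B (restrict_funs M B) \<subseteq> restrict_rels (gQuord A M) B"
proof
  fix \<sigma> assume "\<sigma> \<in> gQuord B (restrict_funs M B)"
  then obtain m where m: "m \<ge> 1" "gen_quasiorder B m \<sigma>"
    and pres: "\<forall>g\<in>M. preserves (restrict g B) \<sigma>"
    by (auto simp: gQuord_def restrict_funs_def)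
  have \<sigma>: "\<sigma> \<subseteq> tuples B m" "reflexive_rel B m \<sigma>"
    using m(2) by (auto simp: gen_quasiorder_def)
  have "\<forall>g\<in>M. g ` A \<subseteq> A"
    using assms(2) by (auto simp: PiE_def Pi_def)
  then have "extend_by_diagonal A m \<sigma> \<in> gQuord A M"
    using m gen_quasiorder_extend_by_diagonal[OF m(2) assms(1)]
      preserves_extend_by_diagonal[OF order.trans[OF \<sigma>(1) tuples_subset_lists]] pres
    by (auto simp: gQuord_def)
  moreover have "\<sigma> = restrict_rel (extend_by_diagonal A m \<sigma>) B"
    using restrict_rel_extend_by_diagonal[OF \<sigma> m(1)] by simp
  ultimately show "\<sigma> \<in> restrict_rels (gQuord A M) B"
    unfolding restrict_rels_def by (rule rev_image_eqI)
qed

theorem proposition4p8: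
  fixes A B :: "'a set" and M :: "('a \<Rightarrow> 'a) set"
  assumes "finite A" and "A \<noteq> {}"
    and "M \<subseteq> A \<rightarrow>\<^sub>E A"
    and "B \<noteq> {}" and "B \<subset> A"
    and "\<forall>g\<in>M. g ` B \<subseteq> B"
  shows "gQuord B (restrict_funs M B) = restrict_rels (gQuord A M) B"
proof
  show "gQuord B (restrict_funs M B) \<subseteq> restrict_rels (gQuord A M) B"
    using gQuord_restrict_funs_subset assms(3,5) by blast
  show "restrict_rels (gQuord A M) B \<subseteq> gQuord B (restrict_funs M B)"
    using restrict_rel_in_gQuord[of B A M] assms(5,6) unfolding restrict_rels_def by auto
qed

end
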